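(* (1) For all $j\in\mathbb Z\cup\{\infty\}$ the first coordinate $x:\mathbb R^2\to\mathbb R$ descends to $x_j:X_j\to\mathbb R$ (i.e. $x=x_j\circ\hat\pi^j$), and for $j\in\mathbb Z$ the map $\hat y_j:\mathbb R^2\to S^1(m_v^{-j})$, $\hat y_j(x,y)=y\bmod m_v^{-j}$, descends to $y_j:X_j\to S^1(m_v^{-j})$. (2) If $\sigma$ is a $2$-cell of $X_j$, then $x_j(\sigma)$ is an interval of length $m^{-j}$ whose endpoints are the images of the two vertical $1$-cells of $\sigma$. (3) If $p,p'\in X_j$ and $\pi_j(p)=\pi_j(p')$, then $d_{S^1}(y_j(p),y_j(p'))\le2m_v^{-(j+1)}$. (4) If $\bar\sigma$ is a $2$-cell of $X_{j+1}$, then $y_j(\pi_j^{-1}(\bar\sigma))$ has diameter at most $5m_v^{-(j+1)}$.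
   Context: Standing construction ($n=2$). Fix an integer $L\ge100$, $m=4$, $m_v=3L$. For $j\in\mathbb Z$, $Y_j$ is the cell complex on $\mathbb R^2$ given by the tiling by rectangles $[am^{-j},(a+1)m^{-j}]\times[bm_v^{-j},(b+1)m_v^{-j}]$, $a,b\in\mathbb Z$; a $1$-cell of $Y_j$ is vertical if it is a translate of $\{0\}\times[0,m_v^{-j}]$. Let $\Phi(x,y)=(m^{-1}x,m_v^{-1}y)$. For $k,\ell\in\mathbb Z$, $i\in\{1,2,3\}$, let $a_{k,\ell,i}=\{k+\tfrac i4\}\times[(3\ell+i-1)m_v^{-1},(3\ell+i)m_v^{-1}]$. $\mathcal R$ is the equivalence relation on $\mathbb R^2$ generated by $p\sim p+(0,m_v^{-1})$ for $p\in a_{k,\ell,i}$. $\Phi^j_*\mathcal R=\{(\Phi^jp,\Phi^jq):(p,q)\in\mathcal R\}$; $\mathcal R_j$ is generated by $\Phi^i_*\mathcal R$, $i<j$; $\mathcal R_\infty$ by all of them. For $j\in\mathbb Z\cup\{\infty\}$, $X_j=\mathbb R^2/\mathcal R_j$, $\hat\pi^j$ the quotient map, $\pi_j:X_j\to X_{j+1}$ induced map. $X_j$ carries the CW structure whose open cells are images under $\hat\pi^j$ of open cells of $Y_j$ (vertical cells are images of vertical cells). $S^1(r)=\mathbb R/r\mathbb Z$ with the quotient metric $d_{S^1}$. *)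

theory Defs
  imports "HOL-Analysis.Analysis"
begin

type_synonym pt = "real \<times> real"

definition equiv_closure :: "'a rel \<Rightarrow> 'a rel" where
  "equiv_closure r = (r \<union> r\<inverse>)\<^sup>*"

definition mh :: real where "mh = 4"
definition mv :: "int \<Rightarrow> real" where "mv L = real_of_int (3 * L)"

definition PhiPow :: "int \<Rightarrow> int \<Rightarrow> pt \<Rightarrow> pt" where
  "PhiPow L j p = (mh powi (-j) * fst p, mv L powi (-j) * snd p)"

definition aseg :: "int \<Rightarrow> int \<Rightarrow> int \<Rightarrow> int \<Rightarrow> pt set" where
  "aseg L k l i = {k + of_int i / 4} \<times>
      {real_of_int (3 * l + i - 1) / mv L .. real_of_int (3 * l + i) / mv L}"

definition baseGen :: "int \<Rightarrow> pt rel" where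
  "baseGen L = {(p, (fst p, snd p + 1 / mv L)) | p.
      \<exists>k l i. i \<in> {1,2,3} \<and> p \<in> aseg L k l i}"

definition baseR :: "int \<Rightarrow> pt rel" where
  "baseR L = equiv_closure (baseGen L)"

definition pushR :: "int \<Rightarrow> int \<Rightarrow> pt rel \<Rightarrow> pt rel" where
  "pushR L i R = {(PhiPow L i p, PhiPow L i q) | p q. (p, q) \<in> R}"

definition Rj :: "int \<Rightarrow> int \<Rightarrow> pt rel" where
  "Rj L j = equiv_closure (\<Union>i\<in>{..<j}. pushR L i (baseR L))"

definition Rinf :: "int \<Rightarrow> pt rel" where
  "Rinf L = equiv_closure (\<Union>i. pushR L i (baseR L))"

definition Xq :: "pt rel \<Rightarrow> pt set set" where
  "Xq R = UNIV // R"

definition qmap :: "pt rel \<Rightarrow> pt \<Rightarrow> pt set" where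
  "qmap R p = R `` {p}"

text \<open>pi_j : X_j -> X_{j+1}, induced by the identity of R^2.\<close>
definition pij :: "int \<Rightarrow> int \<Rightarrow> pt set \<Rightarrow> pt set" where
  "pij L j C = Rj L (j + 1) `` C"

text \<open>Circle S^1(r) = R / rZ, elements represented by their representative in [0,r);
  quotient metric.\<close>
definition circ_mod :: "real \<Rightarrow> real \<Rightarrow> real" where
  "circ_mod r y = y - r * of_int \<lfloor>y / r\<rfloor>"

definition dS1 :: "real \<Rightarrow> real \<Rightarrow> real \<Rightarrow> real" where
  "dS1 r a b = (INF k\<in>(UNIV :: int set). \<bar>a - b + of_int k * r\<bar>)"

definition xdesc :: "pt set \<Rightarrow> real" where
  "xdesc C = fst (SOME p. p \<in> C)"

definition ydesc :: "int \<Rightarrow> int \<Rightarrow> pt set \<Rightarrow> real" where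
  "ydesc L j C = circ_mod (mv L powi (-j)) (snd (SOME p. p \<in> C))"

definition cell2 :: "int \<Rightarrow> int \<Rightarrow> int \<Rightarrow> int \<Rightarrow> pt set" where
  "cell2 L j a b = {of_int a * mh powi (-j) <..< of_int (a + 1) * mh powi (-j)} \<times>
                   {of_int b * mv L powi (-j) <..< of_int (b + 1) * mv L powi (-j)}"

definition vcell :: "int \<Rightarrow> int \<Rightarrow> int \<Rightarrow> int \<Rightarrow> pt set" where
  "vcell L j a b = {of_int a * mh powi (-j)} \<times>
                   {of_int b * mv L powi (-j) <..< of_int (b + 1) * mv L powi (-j)}"

end

theory Submission
  imports Defs
begin

text \<open>
  A generating pair of \<open>\<Phi>^i_* \<R>\<close> keeps \<open>x\<close> and moves \<open>y\<close> by \<open>m_v^-(i+1)\<close>, a multiple of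
  \<open>m_v^-j\<close> when \<open>i < j\<close>; hence \<open>x\<close> and \<open>y mod m_v^-j\<close> are invariants of \<open>\<R>_j\<close> and descend.
  For (3) and (4) we use an explicit invariant of \<open>\<R>_(j+1)\<close>. On the columns \<open>x \<in> m^-j \<int>\<close> it
  records \<open>y mod m_v^-j\<close>; on a column \<open>x = (k + i/4) m^-j\<close> glued at level \<open>j\<close> it records the
  rescaled coordinate \<open>s = m_v^(j+1) y - (i - 1)\<close> modulo the gluing \<open>s \<sim> s + 1\<close>
  (\<open>s \<in> [3l, 3l+1]\<close>), which moves \<open>s\<close> by at most \<open>2\<close>; elsewhere it records \<open>y\<close>. So points
  identified by \<open>\<pi>_j\<close> have \<open>y\<close>-coordinates within \<open>2 m_v^-(j+1)\<close> modulo \<open>m_v^-j\<close>, and (4)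
  adds to two such estimates the height \<open>m_v^-(j+1)\<close> of a 2-cell of \<open>Y_(j+1)\<close>.
\<close>

subsection \<open>Invariants of the relations \<open>\<R>_j\<close>\<close>

lemma equiv_closure_refl: "(p, p) \<in> equiv_closure r"
  by (simp add: equiv_closure_def)

lemma equiv_closure_invariant:
  assumes "(p, q) \<in> equiv_closure r" and "\<And>p q. (p, q) \<in> r \<Longrightarrow> G p = G q"
  shows "G p = G q"
  using assms(1) unfolding equiv_closure_def
proof (induction rule: rtrancl_induct)
  case base
  then show ?case by simp
next
  case (step y z)
  then show ?case using assms(2) by auto
qed

lemma pushR_baseR_invariant:
  assumes "(p, q) \<in> pushR L i (baseR L)"
    and "\<And>p q. (p, q) \<in> baseGen L \<Longrightarrow> G (PhiPow L i p) = G (PhiPow L i q)"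
  shows "G p = G q"
proof -
  obtain p0 q0 where p0: "p = PhiPow L i p0" "q = PhiPow L i q0" "(p0, q0) \<in> baseR L"
    using assms(1) unfolding pushR_def by auto
  have "(G \<circ> PhiPow L i) p0 = (G \<circ> PhiPow L i) q0"
    using p0(3) unfolding baseR_def by (rule equiv_closure_invariant) (simp add: assms(2))
  then show ?thesis using p0 by simp
qed

lemma Rj_invariant:
  assumes "(p, q) \<in> Rj L J"
    and "\<And>i p q. i < J \<Longrightarrow> (p, q) \<in> baseGen L \<Longrightarrow> G (PhiPow L i p) = G (PhiPow L i q)"
  shows "G p = G q"
  using assms(1) unfolding Rj_def
  by (rule equiv_closure_invariant) (auto intro: pushR_baseR_invariant assms(2))

lemma Rinf_invariant:
  assumes "(p, q) \<in> Rinf L"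
    and "\<And>i p q. (p, q) \<in> baseGen L \<Longrightarrow> G (PhiPow L i p) = G (PhiPow L i q)"
  shows "G p = G q"
  using assms(1) unfolding Rinf_def
  by (rule equiv_closure_invariant) (auto intro: pushR_baseR_invariant assms(2))

lemma Rj_refl: "(p, p) \<in> Rj L j"
  unfolding Rj_def by (rule equiv_closure_refl)

lemma Rinf_refl: "(p, p) \<in> Rinf L"
  unfolding Rinf_def by (rule equiv_closure_refl)

lemma invariant_some_qmap:
  assumes "(p, p) \<in> R" and "\<And>p q. (p, q) \<in> R \<Longrightarrow> G p = G q"
  shows "G (SOME q. q \<in> qmap R p) = G p"
proof -
  have "p \<in> qmap R p" using assms(1) unfolding qmap_def by simp
  then have "(SOME q. q \<in> qmap R p) \<in> qmap R p" by (rule someI)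
  then show ?thesis using assms(2) unfolding qmap_def by (metis Image_singleton_iff)
qed

lemma some_mem_Xq:
  assumes "P \<in> Xq R" and "\<And>p. (p, p) \<in> R"
  shows "(SOME q. q \<in> P) \<in> P"
proof -
  obtain p0 where "P = R `` {p0}" using assms(1) unfolding Xq_def by (auto elim: quotientE)
  then have "p0 \<in> P" using assms(2) by blast
  then show ?thesis by (rule someI)
qed

lemma baseGen_snd:
  "(p, q) \<in> baseGen L \<Longrightarrow> q = (fst p, snd p + 1 / mv L)"
  unfolding baseGen_def by auto

lemma baseGen_fst_PhiPow:
  "(p, q) \<in> baseGen L \<Longrightarrow> fst (PhiPow L i p) = fst (PhiPow L i q)"
  unfolding baseGen_def PhiPow_def by auto

lemma fst_eq_xdesc_Rj: "fst p = xdesc (qmap (Rj L j) p)"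
  unfolding xdesc_def
  by (rule invariant_some_qmap[OF Rj_refl, symmetric]) (erule Rj_invariant, erule baseGen_fst_PhiPow)

lemma fst_eq_xdesc_Rinf: "fst p = xdesc (qmap (Rinf L) p)"
  unfolding xdesc_def
  by (rule invariant_some_qmap[OF Rinf_refl, symmetric]) (erule Rinf_invariant, erule baseGen_fst_PhiPow)

lemma xdesc_qmap_Rj_image: "xdesc ` qmap (Rj L j) ` A = fst ` A"
  using fst_eq_xdesc_Rj by (simp add: image_image)

lemma mv_pos: "L \<ge> 100 \<Longrightarrow> mv L > 0"
  unfolding mv_def by simp

lemma mv_powi_succ_mult: "L \<ge> 100 \<Longrightarrow> mv L powi (j + 1) * mv L powi (-j) = mv L"
  using mv_pos[of L] by (simp add: power_int_add[symmetric])

subsection \<open>The coordinate \<open>y\<close> modulo \<open>m_v^-j\<close>\<close>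

lemma circ_mod_add_int_mult:
  assumes "r > 0"
  shows "circ_mod r (y + of_int n * r) = circ_mod r y"
proof -
  have "(y + of_int n * r) / r = y / r + of_int n" using assms by (simp add: field_simps)
  then show ?thesis unfolding circ_mod_def by (simp add: algebra_simps)
qed

lemma dS1_circ_mod_le:
  assumes "r > 0"
  shows "dS1 r (circ_mod r a) (circ_mod r b) \<le> \<bar>a - b + of_int k * r\<bar>"
proof -
  have "circ_mod r a - circ_mod r b + of_int (k + \<lfloor>a / r\<rfloor> - \<lfloor>b / r\<rfloor>) * r = a - b + of_int k * r"
    unfolding circ_mod_def by (simp add: algebra_simps)
  moreover have "bdd_below (range (\<lambda>k::int. \<bar>circ_mod r a - circ_mod r b + of_int k * r\<bar>))"
    by (rule bdd_belowI[of _ 0]) auto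
  ultimately show ?thesis unfolding dS1_def by (metis cINF_lower UNIV_I)
qed

lemma baseGen_circ_mod_PhiPow:
  assumes L: "L \<ge> 100" and "i < j" and pq: "(p, q) \<in> baseGen L"
  shows "circ_mod (mv L powi (-j)) (snd (PhiPow L i q)) = circ_mod (mv L powi (-j)) (snd (PhiPow L i p))"
proof -
  have m0: "mv L \<noteq> 0" using mv_pos[OF L] by simp
  define n where "n = nat (j - i - 1)"
  have "mv L powi (-i) / mv L = mv L powi (int n + (-j))"
    using m0 \<open>i < j\<close> by (simp add: n_def power_int_diff)
  also have "\<dots> = mv L ^ n * mv L powi (-j)"
    using m0 power_int_add[of "mv L" "int n" "-j"] by simp
  also have "mv L ^ n = of_int ((3 * L) ^ n)"
    by (simp add: mv_def)
  finally have "snd (PhiPow L i q) = snd (PhiPow L i p) + of_int ((3 * L) ^ n) * mv L powi (-j)"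
    using baseGen_snd[OF pq] by (simp add: PhiPow_def algebra_simps)
  then show ?thesis
    using circ_mod_add_int_mult[of "mv L powi (-j)" "snd (PhiPow L i p)" "(3 * L) ^ n"] mv_pos[OF L]
    by simp
qed

lemma circ_mod_eq_ydesc:
  assumes "L \<ge> 100"
  shows "circ_mod (mv L powi (-j)) (snd p) = ydesc L j (qmap (Rj L j) p)"
  unfolding ydesc_def
  by (rule invariant_some_qmap[OF Rj_refl, symmetric])
    (erule Rj_invariant, erule baseGen_circ_mod_PhiPow[OF assms, symmetric])

subsection \<open>An invariant of \<open>\<R>_(j+1)\<close>\<close>

text \<open>\<open>quarter_digit j x\<close> is \<open>i \<in> {0,1,2,3}\<close> if \<open>x = (k + i/4) m^-j\<close> for an integer \<open>k\<close>,
  and \<open>4\<close> if \<open>x \<notin> m^-(j+1) \<int>\<close>.\<close>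
definition quarter_digit :: "int \<Rightarrow> real \<Rightarrow> int" where
  "quarter_digit j x =
     (if 4 * mh powi j * x \<in> \<int> then \<lfloor>4 * mh powi j * x\<rfloor> mod 4 else 4)"

text \<open>A representative of \<open>s\<close> modulo the gluing \<open>s \<sim> s + 1\<close> for \<open>s \<in> [3l, 3l+1]\<close>:
  the class of \<open>3l\<close> is \<open>{3l, 3l+1, 3l+2}\<close>.\<close>
definition glue_rep :: "real \<Rightarrow> real" where
  "glue_rep s =
     (if s \<in> \<int> then 3 * of_int \<lfloor>s / 3\<rfloor>
      else if s - 3 * of_int \<lfloor>s / 3\<rfloor> < 1 then s
      else if s - 3 * of_int \<lfloor>s / 3\<rfloor> < 2 then s - 1
      else s)"

definition glue_coord :: "int \<Rightarrow> int \<Rightarrow> int \<Rightarrow> real \<Rightarrow> real" where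
  "glue_coord L j t y =
     (if t = 0 then circ_mod (mv L powi (-j)) y
      else if t \<in> {1, 2, 3} then glue_rep (mv L powi (j + 1) * y - of_int (t - 1))
      else y)"

definition glue_invariant :: "int \<Rightarrow> int \<Rightarrow> pt \<Rightarrow> real \<times> real" where
  "glue_invariant L j p = (fst p, glue_coord L j (quarter_digit j (fst p)) (snd p))"

lemma glue_rep_step:
  assumes "3 * of_int l \<le> s" and "s \<le> 3 * of_int l + 1"
  shows "glue_rep (s + 1) = glue_rep s"
proof -
  have fl: "\<lfloor>s / 3\<rfloor> = l" "\<lfloor>(s + 1) / 3\<rfloor> = l"
    using assms by (simp_all add: floor_eq_iff field_simps)
  have int_iff: "s + 1 \<in> \<int> \<longleftrightarrow> s \<in> \<int>"
    by (metis Ints_1 Ints_add Ints_diff add_diff_cancel_right')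
  show ?thesis
  proof (cases "s \<in> \<int>")
    case True
    then show ?thesis using int_iff fl by (simp add: glue_rep_def)
  next
    case False
    then have "s \<noteq> 3 * of_int l" "s \<noteq> 3 * of_int l + 1" by auto
    then have "0 < s - 3 * of_int l" "s - 3 * of_int l < 1" using assms by linarith+
    then show ?thesis using False int_iff fl by (simp add: glue_rep_def)
  qed
qed

lemma glue_rep_le: "glue_rep s \<le> s \<and> s \<le> glue_rep s + 2"
proof (cases "s \<in> \<int>")
  case True
  then obtain m where m: "s = of_int m" by (auto elim: Ints_cases)
  have "\<lfloor>real_of_int m / 3\<rfloor> = m div 3" using floor_divide_of_int_eq[of m 3] by simp
  moreover have "3 * (m div 3) \<le> m" "m \<le> 3 * (m div 3) + 2" by auto
  ultimately show ?thesis using True m unfolding glue_rep_def by simp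
next
  case False
  have "3 * of_int \<lfloor>s / 3\<rfloor> \<le> s" "s < 3 * of_int \<lfloor>s / 3\<rfloor> + 3" by linarith+
  then show ?thesis using False unfolding glue_rep_def by auto
qed

lemma glue_rep_eq_imp_dist_le: "glue_rep s = glue_rep s' \<Longrightarrow> \<bar>s - s'\<bar> \<le> 2"
  using glue_rep_le[of s] glue_rep_le[of s'] by linarith

lemma quarter_digit_aseg:
  assumes "i \<le> j" and "p \<in> aseg L k l i'" and "i' \<in> {1, 2, 3}"
  shows "quarter_digit j (fst (PhiPow L i p)) = (if i = j then i' else 0)"
proof -
  define n where "n = nat (j - i)"
  have "4 * mh powi j * fst (PhiPow L i p) = (mh powi j * mh powi (-i)) * (4 * fst p)"
    by (simp add: PhiPow_def algebra_simps)
  also have "mh powi j * mh powi (-i) = mh powi int n"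
    using \<open>i \<le> j\<close> unfolding n_def mh_def by (simp add: power_int_add[symmetric])
  also have "\<dots> = 4 ^ n"
    by (simp add: mh_def)
  also have "4 * fst p = of_int (4 * k + i')" using assms(2) unfolding aseg_def by auto
  finally have x: "4 * mh powi j * fst (PhiPow L i p) = of_int (4 ^ n * (4 * k + i'))"
    by simp
  have "(4 ^ n * (4 * k + i')) mod 4 = (if i = j then i' else 0)"
  proof (cases "i = j")
    case True
    then show ?thesis using assms(3) by (auto simp: n_def)
  next
    case False
    then have "(4::int) dvd 4 ^ n" using \<open>i \<le> j\<close> by (simp add: n_def dvd_power)
    then show ?thesis using False by auto
  qed
  then show ?thesis unfolding quarter_digit_def x by (simp only: Ints_of_int if_True floor_of_int)
qed

lemma baseGen_glue_invariant_PhiPow: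
  assumes L: "L \<ge> 100" and "i \<le> j" and pq: "(p, q) \<in> baseGen L"
  shows "glue_invariant L j (PhiPow L i p) = glue_invariant L j (PhiPow L i q)"
proof -
  obtain k l i' where p: "p \<in> aseg L k l i'" and i': "i' \<in> {1, 2, 3}"
    using pq unfolding baseGen_def by auto
  have x: "fst (PhiPow L i q) = fst (PhiPow L i p)"
    using baseGen_fst_PhiPow[OF pq] by simp
  have digit: "quarter_digit j (fst (PhiPow L i p)) = (if i = j then i' else 0)"
    using quarter_digit_aseg[OF \<open>i \<le> j\<close> p i'] .
  have "glue_coord L j (if i = j then i' else 0) (snd (PhiPow L i p)) =
        glue_coord L j (if i = j then i' else 0) (snd (PhiPow L i q))"
  proof (cases "i = j")
    case False
    then show ?thesis
      using \<open>i \<le> j\<close> baseGen_circ_mod_PhiPow[OF L _ pq] by (simp add: glue_coord_def)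
  next
    case True
    define s where "s = mv L * snd p - of_int (i' - 1)"
    have "real_of_int (3 * l + i' - 1) / mv L \<le> snd p" "snd p \<le> real_of_int (3 * l + i') / mv L"
      using p unfolding aseg_def by auto
    then have s: "3 * of_int l \<le> s" "s \<le> 3 * of_int l + 1"
      using mv_pos[OF L] unfolding s_def by (simp_all add: field_simps)
    have "mv L powi (j + 1) * snd (PhiPow L i p) = mv L * snd p"
      "mv L powi (j + 1) * snd (PhiPow L i q) = mv L * snd p + 1"
      using True mv_powi_succ_mult[OF L, of j] mv_pos[OF L] baseGen_snd[OF pq]
      by (simp_all add: PhiPow_def field_simps)
    moreover have "i' \<noteq> 0" using i' by auto
    ultimately show ?thesis
      using True i' glue_rep_step[OF s] by (simp add: glue_coord_def s_def algebra_simps)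
  qed
  then show ?thesis using digit x by (simp add: glue_invariant_def)
qed

lemma glue_invariant_Rj:
  assumes "L \<ge> 100" and "J \<le> j + 1" and "(p, q) \<in> Rj L J"
  shows "glue_invariant L j p = glue_invariant L j q"
  using assms(3)
  by (rule Rj_invariant) (rule baseGen_glue_invariant_PhiPow[OF assms(1)], use assms(2) in simp_all)

lemma glue_coord_eq_imp_close:
  assumes L: "L \<ge> 100" and eq: "glue_coord L j t y = glue_coord L j t y'"
  shows "\<exists>k::int. \<bar>y - y' + of_int k * mv L powi (-j)\<bar> \<le> 2 * mv L powi (-(j + 1))"
proof -
  have pos: "mv L powi (j + 1) > 0" "0 \<le> 2 * mv L powi (-(j + 1))" using mv_pos[OF L] by simp_all
  consider "t = 0" | "t \<in> {1, 2, 3}" | "t \<noteq> 0" "t \<notin> {1, 2, 3}" by blast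
  then show ?thesis
  proof cases
    case 1
    then have "circ_mod (mv L powi (-j)) y = circ_mod (mv L powi (-j)) y'"
      using eq by (simp add: glue_coord_def)
    then have "y - y' + of_int (\<lfloor>y' / mv L powi (-j)\<rfloor> - \<lfloor>y / mv L powi (-j)\<rfloor>) * mv L powi (-j) = 0"
      unfolding circ_mod_def by (simp add: algebra_simps)
    then show ?thesis using pos(2) by (metis abs_zero)
  next
    case 2
    have "\<bar>(mv L powi (j + 1) * y - of_int (t - 1)) - (mv L powi (j + 1) * y' - of_int (t - 1))\<bar> \<le> 2"
      using 2 eq by (intro glue_rep_eq_imp_dist_le) (auto simp: glue_coord_def)
    then have "mv L powi (j + 1) * \<bar>y - y'\<bar> \<le> 2"
      using pos(1) by (simp add: abs_mult right_diff_distrib[symmetric])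
    then have "\<bar>y - y'\<bar> \<le> 2 * mv L powi (-(j + 1))"
      using pos(1) power_int_minus[of "mv L" "j + 1"] by (simp add: field_simps)
    then show ?thesis by (intro exI[of _ 0]) simp
  next
    case 3
    then show ?thesis using eq pos(2) by (intro exI[of _ 0]) (simp add: glue_coord_def)
  qed
qed

lemma glue_invariant_eq_imp_close:
  assumes "L \<ge> 100" and "glue_invariant L j p = glue_invariant L j q"
  shows "\<exists>k::int. \<bar>snd p - snd q + of_int k * mv L powi (-j)\<bar> \<le> 2 * mv L powi (-(j + 1))"
  using assms by (intro glue_coord_eq_imp_close) (auto simp: glue_invariant_def)

subsection \<open>Cells and the map \<open>\<pi>_j\<close>\<close>

lemma xdesc_cell2_interval:
  assumes L: "L \<ge> 100"
  shows "\<exists>u v. v - u = mh powi (-j)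
           \<and> {u<..<v} \<subseteq> xdesc ` (qmap (Rj L j) ` cell2 L j a b)
           \<and> xdesc ` (qmap (Rj L j) ` cell2 L j a b) \<subseteq> {u..v}
           \<and> xdesc ` (qmap (Rj L j) ` vcell L j a b) = {u}
           \<and> xdesc ` (qmap (Rj L j) ` vcell L j (a + 1) b) = {v}"
proof -
  define u where "u = of_int a * mh powi (-j)"
  define v where "v = of_int (a + 1) * mh powi (-j)"
  define B where "B = {of_int b * mv L powi (-j) <..< of_int (b + 1) * mv L powi (-j)}"
  have "mv L powi (-j) > 0" using mv_pos[OF L] by simp
  then have "B \<noteq> {}" unfolding B_def by (simp add: algebra_simps)
  moreover have "cell2 L j a b = {u<..<v} \<times> B" "vcell L j a b = {u} \<times> B"
    "vcell L j (a + 1) b = {v} \<times> B"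
    unfolding cell2_def vcell_def u_def v_def B_def by simp_all
  moreover have "v - u = mh powi (-j)" unfolding u_def v_def by (simp add: algebra_simps)
  ultimately show ?thesis unfolding xdesc_qmap_Rj_image by (intro exI[of _ u] exI[of _ v]) auto
qed

lemma glue_invariant_const_on_pij:
  assumes L: "L \<ge> 100" and P: "P \<in> Xq (Rj L j)" and "q \<in> pij L j P" and "q' \<in> pij L j P"
  shows "glue_invariant L j q = glue_invariant L j q'"
proof -
  obtain p0 where P0: "P = Rj L j `` {p0}" using P unfolding Xq_def by (auto elim: quotientE)
  have "glue_invariant L j r = glue_invariant L j p0" if r: "r \<in> pij L j P" for r
  proof -
    obtain x where "x \<in> P" "(x, r) \<in> Rj L (j + 1)" using r unfolding pij_def by blast
    then show ?thesis
      using P0 glue_invariant_Rj[OF L, of "j + 1" j x r] glue_invariant_Rj[OF L, of j j p0 x] by simp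
  qed
  then show ?thesis using assms(3,4) by simp
qed

lemma class_subset_pij: "P \<subseteq> pij L j P"
  unfolding pij_def using Rj_refl by blast

lemma ydesc_dist_le_of_pij_eq:
  assumes L: "L \<ge> 100" and P: "P \<in> Xq (Rj L j)" and P': "P' \<in> Xq (Rj L j)"
    and eq: "pij L j P = pij L j P'"
  shows "dS1 (mv L powi (-j)) (ydesc L j P) (ydesc L j P') \<le> 2 * mv L powi (-(j + 1))"
proof -
  define q q' where "q = (SOME q. q \<in> P)" and "q' = (SOME q. q \<in> P')"
  have "q \<in> pij L j P" "q' \<in> pij L j P"
    using some_mem_Xq[OF P Rj_refl] some_mem_Xq[OF P' Rj_refl] class_subset_pij eq
    unfolding q_def q'_def by blast+
  then obtain k where "\<bar>snd q - snd q' + of_int k * mv L powi (-j)\<bar> \<le> 2 * mv L powi (-(j + 1))"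
    using glue_invariant_eq_imp_close[OF L glue_invariant_const_on_pij[OF L P]] by blast
  then show ?thesis
    using dS1_circ_mod_le[of "mv L powi (-j)" "snd q" "snd q'" k] mv_pos[OF L]
    unfolding ydesc_def q_def q'_def by simp
qed

lemma ydesc_dist_le_of_pij_cell2:
  assumes L: "L \<ge> 100" and P: "P \<in> Xq (Rj L j)" and P': "P' \<in> Xq (Rj L j)"
    and c: "pij L j P \<in> qmap (Rj L (j + 1)) ` cell2 L (j + 1) a b"
    and c': "pij L j P' \<in> qmap (Rj L (j + 1)) ` cell2 L (j + 1) a b"
  shows "dS1 (mv L powi (-j)) (ydesc L j P) (ydesc L j P') \<le> 5 * mv L powi (-(j + 1))"
proof -
  define q q' where "q = (SOME q. q \<in> P)" and "q' = (SOME q. q \<in> P')"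
  obtain x x' where x: "x \<in> cell2 L (j + 1) a b" "pij L j P = qmap (Rj L (j + 1)) x"
    and x': "x' \<in> cell2 L (j + 1) a b" "pij L j P' = qmap (Rj L (j + 1)) x'"
    using c c' by blast
  have "q \<in> pij L j P" "q' \<in> pij L j P'"
    using some_mem_Xq[OF P Rj_refl] some_mem_Xq[OF P' Rj_refl] class_subset_pij
    unfolding q_def q'_def by blast+
  moreover have "x \<in> pij L j P" "x' \<in> pij L j P'"
    using x(2) x'(2) Rj_refl unfolding qmap_def by auto
  ultimately obtain k1 k2 where
    k1: "\<bar>snd q - snd x + of_int k1 * mv L powi (-j)\<bar> \<le> 2 * mv L powi (-(j + 1))" and
    k2: "\<bar>snd x' - snd q' + of_int k2 * mv L powi (-j)\<bar> \<le> 2 * mv L powi (-(j + 1))"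
    using glue_invariant_eq_imp_close[OF L glue_invariant_const_on_pij[OF L P]]
      glue_invariant_eq_imp_close[OF L glue_invariant_const_on_pij[OF L P']] by metis
  have "\<bar>snd x - snd x'\<bar> < mv L powi (-(j + 1))"
    using x(1) x'(1) unfolding cell2_def by (auto simp: algebra_simps abs_less_iff)
  then have "\<bar>snd q - snd q' + of_int (k1 + k2) * mv L powi (-j)\<bar> \<le> 5 * mv L powi (-(j + 1))"
    using k1 k2 by (simp add: algebra_simps abs_le_iff abs_less_iff)
  then show ?thesis
    using dS1_circ_mod_le[of "mv L powi (-j)" "snd q" "snd q'" "k1 + k2"] mv_pos[OF L]
    unfolding ydesc_def q_def q'_def by simp
qed

theorem mainTheorem6:
  fixes L :: int
  assumes "L \<ge> 100"
  shows
   "(\<forall>j::int. (\<forall>p. fst p = xdesc (qmap (Rj L j) p))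
              \<and> (\<forall>p. circ_mod (mv L powi (-j)) (snd p) = ydesc L j (qmap (Rj L j) p)))
    \<and> (\<forall>p. fst p = xdesc (qmap (Rinf L) p))
    \<and> (\<forall>j a b::int.
        (\<exists>u v. v - u = mh powi (-j)
           \<and> {u<..<v} \<subseteq> xdesc ` (qmap (Rj L j) ` cell2 L j a b)
           \<and> xdesc ` (qmap (Rj L j) ` cell2 L j a b) \<subseteq> {u..v}
           \<and> xdesc ` (qmap (Rj L j) ` vcell L j a b) = {u}
           \<and> xdesc ` (qmap (Rj L j) ` vcell L j (a + 1) b) = {v}))
    \<and> (\<forall>j::int. \<forall>P\<in>Xq (Rj L j). \<forall>P'\<in>Xq (Rj L j).
        pij L j P = pij L j P' \<longrightarrow>
        dS1 (mv L powi (-j)) (ydesc L j P) (ydesc L j P') \<le> 2 * mv L powi (-(j + 1)))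
    \<and> (\<forall>j a b::int. \<forall>P\<in>Xq (Rj L j). \<forall>P'\<in>Xq (Rj L j).
        pij L j P \<in> qmap (Rj L (j + 1)) ` cell2 L (j + 1) a b \<longrightarrow>
        pij L j P' \<in> qmap (Rj L (j + 1)) ` cell2 L (j + 1) a b \<longrightarrow>
        dS1 (mv L powi (-j)) (ydesc L j P) (ydesc L j P') \<le> 5 * mv L powi (-(j + 1)))"
  using fst_eq_xdesc_Rj circ_mod_eq_ydesc[OF assms] fst_eq_xdesc_Rinf
    xdesc_cell2_interval[OF assms] ydesc_dist_le_of_pij_eq[OF assms]
    ydesc_dist_le_of_pij_cell2[OF assms]
  by (intro conjI allI ballI impI) metis+

end
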